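(* Assume the well-posedness, controllability, common optimal equilibrium and strict stochastic dissipativity assumptions below, and suppose moreover that there is $\gamma>0$ with $\rho(x,i)\ge\gamma\|x-x_s\|^2$ for all $x\in\mathbb{R}^n$ and $i\in\mathcal{N}$. Then the EMPC-controlled system $x_{k+1}=f(x_k,\kappa_N(x_k,\theta_k),\theta_k)$ is mean square stable: $\mathbb{E}[\|x_k\|^2]\to0$ as $k\to\infty$ for all initial conditions $(x_0,\theta_0)$ in the feasibility domain $X_N$.
   Context: Setting: $\mathcal{N}=\{1,\dots,\nu\}$; $\{\theta_k\}$ a time-homogeneous Markov chain on $\mathcal{N}$ with transition matrix $P=(p_{ij})$ on a filtered probability space $(\Omega,\mathfrak{F},\{\mathfrak{F}_k\},\mathbb{P})$, $\mathfrak{F}_k$ generated by the history up to time $k$; system $x_{k+1}=f(x_k,u_k,\theta_k)$ with $x_k,\theta_k$ measured at time $k$; constraints $(x_k,u_k)\in Y_{\theta_k}$; stage cost $\ell$. $u\lhd\mathfrak{F}_k$ means $\mathfrak{F}_k$-measurable. Cover $\mathcal{C}(i)=\{j:p_{ij}>0\}$; bet node $\mathrm{bet}(i)\in\mathcal{C}(i)$ maximizing $p_{ij}$ over $j\in\mathcal{C}(i)$. Well-posedness: each $\ell(\cdot,\cdot,\theta)$ nonnegative, lower semicontinuous, level-bounded in $u$ locally uniformly in $x$; $f(\cdot,\cdot,\theta)$ continuous; $Y_\theta$ nonempty compact; chain irreducible and aperiodic. Optimal steady states $(x_s^\theta,u_s^\theta)$ minimize $\ell(x,u,\theta)$ s.t.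 $f(x,u,\theta)=x$, $(x,u)\in Y_\theta$. Controllability: for all $i,j$ there is $\bar u_s^{i,j}$ with $(x_s^i,\bar u_s^{i,j})\in Y_j$, $f(x_s^i,\bar u_s^{i,j},j)=x_s^{\mathrm{bet}(j)}$. Common optimal equilibrium: one optimal steady state $(x_s,u_s)=(0,0)$ common to all modes, with optimal steady-state cost $\ell_s$. Strict stochastic dissipativity: there are $\lambda:\mathbb{R}^n\times\mathcal{N}\to\mathbb{R}$, lower semicontinuous in the first argument, with $\lambda(x_s,\theta)=\lambda_s$ independent of $\theta$, and a convex $\rho:\mathbb{R}^n\times\mathcal{N}\to\mathbb{R}_+$ positive definite w.r.t. $x_s$, such that $\mathbb{E}[\lambda(x_{k+1},\theta_{k+1})-\lambda(x_k,\theta_k)\mid\mathfrak{F}_k]\le\ell(x_k,u_k,\theta_k)-\ell_s-\rho(x_k,\theta_k)$ for all states, inputs and modes, where $x_{k+1}=f(x_k,u_k,\theta_k)$. EMPC problem $\mathbb{P}(x,\theta)$: minimize $\mathbb{E}[\sum_{j=0}^{N-1}\ell(x_j,u_j,\theta_j)\mid\mathfrak{F}_0]$ subject to $x_{k+1}=f(x_k,u_k,\theta_k)$, $(x_k,u_k)\in Y_{\theta_k}$, $(x_0,\theta_0)=(x,\theta)$, $x_N=x_s^{\mathrm{bet}(\theta_{N-1})}$, $u_k\lhd\mathfrak{F}_k$; $X_N$ is its feasibility domain and $\kappa_N$ the first element of an optimal policy. *)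

theory Defs
  imports "HOL-Analysis.Analysis"
begin

definition lsc :: "('a::topological_space \<Rightarrow> real) \<Rightarrow> bool" where
  "lsc g \<longleftrightarrow> (\<forall>x a. a < g x \<longrightarrow> eventually (\<lambda>y. a < g y) (nhds x))"

definition level_bounded_loc_unif :: "('a::topological_space \<Rightarrow> 'b::metric_space \<Rightarrow> real) \<Rightarrow> bool" where
  "level_bounded_loc_unif g \<longleftrightarrow>
     (\<forall>x0 \<alpha>. \<exists>V. open V \<and> x0 \<in> V \<and> bounded {u. \<exists>x\<in>V. g x u \<le> \<alpha>})"

definition stochastic_matrix :: "('q::finite \<Rightarrow> 'q \<Rightarrow> real) \<Rightarrow> bool" where
  "stochastic_matrix p \<longleftrightarrow> (\<forall>i j. 0 \<le> p i j) \<and> (\<forall>i. (\<Sum>j\<in>UNIV. p i j) = 1)"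

fun mpow :: "('q::finite \<Rightarrow> 'q \<Rightarrow> real) \<Rightarrow> nat \<Rightarrow> 'q \<Rightarrow> 'q \<Rightarrow> real" where
  "mpow p 0 i j = (if i = j then 1 else 0)"
| "mpow p (Suc k) i j = (\<Sum>l\<in>UNIV. mpow p k i l * p l j)"

definition irreducible_chain :: "('q::finite \<Rightarrow> 'q \<Rightarrow> real) \<Rightarrow> bool" where
  "irreducible_chain p \<longleftrightarrow> (\<forall>i j. \<exists>k>0. mpow p k i j > 0)"

definition aperiodic_chain :: "('q::finite \<Rightarrow> 'q \<Rightarrow> real) \<Rightarrow> bool" where
  "aperiodic_chain p \<longleftrightarrow> (\<forall>i. Gcd {k::nat. k > 0 \<and> mpow p k i i > 0} = 1)"

definition cover :: "('q \<Rightarrow> 'q \<Rightarrow> real) \<Rightarrow> 'q \<Rightarrow> 'q set" where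
  "cover p i = {j. p i j > 0}"

definition is_bet :: "('q \<Rightarrow> 'q \<Rightarrow> real) \<Rightarrow> ('q \<Rightarrow> 'q) \<Rightarrow> bool" where
  "is_bet p bet \<longleftrightarrow> (\<forall>i. bet i \<in> cover p i \<and> (\<forall>j\<in>cover p i. p i j \<le> p i (bet i)))"

definition opt_steady_state ::
  "('x \<Rightarrow> 'u \<Rightarrow> 'q \<Rightarrow> 'x) \<Rightarrow> ('x \<Rightarrow> 'u \<Rightarrow> 'q \<Rightarrow> real) \<Rightarrow> ('q \<Rightarrow> ('x \<times> 'u) set)
     \<Rightarrow> 'q \<Rightarrow> 'x \<Rightarrow> 'u \<Rightarrow> bool" where
  "opt_steady_state f l Y \<theta> xs us \<longleftrightarrow>
     f xs us \<theta> = xs \<and> (xs, us) \<in> Y \<theta> \<and>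
     (\<forall>x u. f x u \<theta> = x \<and> (x, u) \<in> Y \<theta> \<longrightarrow> l xs us \<theta> \<le> l x u \<theta>)"

(* Since x_0 is given and
   x_k is a function of x_0 and \<theta>_0..\<theta>_{k-1}, the \<sigma>-algebra F_k is generated by the
   history \<theta>_0..\<theta>_k; an F_k-measurable input u_k is thus a function of that history.
   A policy is therefore a map \<pi> from histories (lists [\<theta>_0,...,\<theta>_k]) to inputs. *)
definition histories :: "'q::finite \<Rightarrow> nat \<Rightarrow> 'q list set" where
  "histories \<theta> n = {h. length h = n \<and> h \<noteq> [] \<and> hd h = \<theta>}"

definition hist_prob :: "('q \<Rightarrow> 'q \<Rightarrow> real) \<Rightarrow> 'q list \<Rightarrow> real" where
  "hist_prob p h = (\<Prod>t<length h - 1. p (h ! t) (h ! Suc t))"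

fun traj :: "('x \<Rightarrow> 'u \<Rightarrow> 'q \<Rightarrow> 'x) \<Rightarrow> 'x \<Rightarrow> ('q list \<Rightarrow> 'u) \<Rightarrow> 'q list \<Rightarrow> nat \<Rightarrow> 'x" where
  "traj f x \<pi> h 0 = x"
| "traj f x \<pi> h (Suc k) = f (traj f x \<pi> h k) (\<pi> (take (Suc k) h)) (h ! k)"

(* feasibility of a policy for problem P(x,\<theta>) with horizon N: constraints hold
   almost surely, i.e. along every history of positive probability *)
definition empc_feasible ::
  "('q::finite \<Rightarrow> 'q \<Rightarrow> real) \<Rightarrow> ('x \<Rightarrow> 'u \<Rightarrow> 'q \<Rightarrow> 'x) \<Rightarrow> ('q \<Rightarrow> ('x \<times> 'u) set)
    \<Rightarrow> ('q \<Rightarrow> 'x) \<Rightarrow> ('q \<Rightarrow> 'q) \<Rightarrow> nat \<Rightarrow> 'x \<Rightarrow> 'q \<Rightarrow> ('q list \<Rightarrow> 'u) \<Rightarrow> bool" where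
  "empc_feasible p f Y xs bet N x \<theta> \<pi> \<longleftrightarrow>
     (\<forall>h\<in>histories \<theta> N. hist_prob p h > 0 \<longrightarrow>
        (\<forall>k<N. (traj f x \<pi> h k, \<pi> (take (Suc k) h)) \<in> Y (h ! k)) \<and>
        traj f x \<pi> h N = xs (bet (h ! (N - 1))))"

definition empc_cost ::
  "('q::finite \<Rightarrow> 'q \<Rightarrow> real) \<Rightarrow> ('x \<Rightarrow> 'u \<Rightarrow> 'q \<Rightarrow> 'x) \<Rightarrow> ('x \<Rightarrow> 'u \<Rightarrow> 'q \<Rightarrow> real)
    \<Rightarrow> nat \<Rightarrow> 'x \<Rightarrow> 'q \<Rightarrow> ('q list \<Rightarrow> 'u) \<Rightarrow> real" where
  "empc_cost p f l N x \<theta> \<pi> =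
     (\<Sum>h\<in>histories \<theta> N. hist_prob p h *
        (\<Sum>k<N. l (traj f x \<pi> h k) (\<pi> (take (Suc k) h)) (h ! k)))"

definition empc_optimal ::
  "('q::finite \<Rightarrow> 'q \<Rightarrow> real) \<Rightarrow> ('x \<Rightarrow> 'u \<Rightarrow> 'q \<Rightarrow> 'x) \<Rightarrow> ('x \<Rightarrow> 'u \<Rightarrow> 'q \<Rightarrow> real)
    \<Rightarrow> ('q \<Rightarrow> ('x \<times> 'u) set) \<Rightarrow> ('q \<Rightarrow> 'x) \<Rightarrow> ('q \<Rightarrow> 'q) \<Rightarrow> nat \<Rightarrow> 'x \<Rightarrow> 'q
    \<Rightarrow> ('q list \<Rightarrow> 'u) \<Rightarrow> bool" where
  "empc_optimal p f l Y xs bet N x \<theta> \<pi> \<longleftrightarrow>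
     empc_feasible p f Y xs bet N x \<theta> \<pi> \<and>
     (\<forall>\<pi>'. empc_feasible p f Y xs bet N x \<theta> \<pi>' \<longrightarrow>
        empc_cost p f l N x \<theta> \<pi> \<le> empc_cost p f l N x \<theta> \<pi>')"

definition empc_domain ::
  "('q::finite \<Rightarrow> 'q \<Rightarrow> real) \<Rightarrow> ('x \<Rightarrow> 'u \<Rightarrow> 'q \<Rightarrow> 'x) \<Rightarrow> ('q \<Rightarrow> ('x \<times> 'u) set)
    \<Rightarrow> ('q \<Rightarrow> 'x) \<Rightarrow> ('q \<Rightarrow> 'q) \<Rightarrow> nat \<Rightarrow> ('x \<times> 'q) set" where
  "empc_domain p f Y xs bet N = {(x, \<theta>). \<exists>\<pi>. empc_feasible p f Y xs bet N x \<theta> \<pi>}"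

fun cl_traj :: "('x \<Rightarrow> 'u \<Rightarrow> 'q \<Rightarrow> 'x) \<Rightarrow> ('x \<Rightarrow> 'q \<Rightarrow> 'u) \<Rightarrow> 'x \<Rightarrow> 'q list \<Rightarrow> nat \<Rightarrow> 'x" where
  "cl_traj f \<kappa> x h 0 = x"
| "cl_traj f \<kappa> x h (Suc k) =
     f (cl_traj f \<kappa> x h k) (\<kappa> (cl_traj f \<kappa> x h k) (h ! k)) (h ! k)"

definition cl_mean_square ::
  "('q::finite \<Rightarrow> 'q \<Rightarrow> real) \<Rightarrow> ('x::real_normed_vector \<Rightarrow> 'u \<Rightarrow> 'q \<Rightarrow> 'x)
    \<Rightarrow> ('x \<Rightarrow> 'q \<Rightarrow> 'u) \<Rightarrow> 'x \<Rightarrow> 'q \<Rightarrow> nat \<Rightarrow> real" where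
  "cl_mean_square p f \<kappa> x0 \<theta>0 k =
     (\<Sum>h\<in>histories \<theta>0 (Suc k). hist_prob p h * (norm (cl_traj f \<kappa> x0 h k))\<^sup>2)"

end

theory Submission
  imports Defs
begin

text \<open>The optimal value function \<open>V\<^sub>N\<close> drops along the closed loop by at least
  \<open>\<ell>(x, \<kappa>\<^sub>N(x, \<theta>), \<theta>) - \<ell>\<^sub>s\<close> in conditional expectation: the optimal policy with its first
  stage removed and the equilibrium input appended is feasible from every successor state, since it
  ends at the common equilibrium. Adding the storage function \<open>\<lambda>\<close> and using dissipativity
  gives a rotated Lyapunov function \<open>V\<^sub>N + \<lambda>\<close> that decreases by \<open>\<rho>\<close> per step. It is bounded
  below on the feasibility domain, because feasible states lie in the compact projections of the
  constraint sets, where the lower semicontinuous \<open>\<lambda>\<close> is bounded below. Telescoping shows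
  \<open>\<Sum>\<^sub>k \<bbbE>[\<rho>(x\<^sub>k, \<theta>\<^sub>k)] < \<infinity>\<close>, so \<open>\<Sum>\<^sub>k \<bbbE>[\<parallel>x\<^sub>k\<parallel>\<^sup>2] < \<infinity>\<close> by the quadratic bound on \<open>\<rho>\<close>, and the
  terms tend to zero.\<close>

lemma finite_histories: "finite (histories (\<theta>::'q::finite) n)"
proof (rule finite_subset)
  show "histories \<theta> n \<subseteq> {h. set h \<subseteq> (UNIV::'q set) \<and> length h = n}"
    unfolding histories_def by blast
qed (rule finite_lists_length_eq, simp)

lemma histories_Suc_0: "histories \<theta> (Suc 0) = {[\<theta>]}"
  by (auto simp: histories_def length_Suc_conv)

lemma sum_histories_Suc_Suc:
  "(\<Sum>h\<in>histories (\<theta>::'q::finite) (Suc (Suc n)). F h)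
     = (\<Sum>j\<in>UNIV. \<Sum>h\<in>histories j (Suc n). F (\<theta> # h))"
proof -
  have "histories \<theta> (Suc (Suc n)) = Cons \<theta> ` (\<Union>j. histories j (Suc n))"
    by (auto simp: histories_def length_Suc_conv)
  then have "(\<Sum>h\<in>histories \<theta> (Suc (Suc n)). F h) = (\<Sum>h\<in>(\<Union>j. histories j (Suc n)). F (\<theta> # h))"
    by (simp add: sum.reindex)
  also have "\<dots> = (\<Sum>j\<in>UNIV. \<Sum>h\<in>histories j (Suc n). F (\<theta> # h))"
    by (rule sum.UNION_disjoint) (simp_all add: finite_histories, auto simp: histories_def)
  finally show ?thesis .
qed

lemma hist_prob_singleton [simp]: "hist_prob p [\<theta>] = 1"
  by (simp add: hist_prob_def)

lemma hist_prob_Cons: "h \<noteq> [] \<Longrightarrow> hist_prob p (\<theta> # h) = p \<theta> (hd h) * hist_prob p h"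
proof -
  assume "h \<noteq> []"
  then obtain n where n: "length h = Suc n" by (cases h) auto
  have "hist_prob p (\<theta> # h) = p \<theta> (h ! 0) * (\<Prod>t<n. p (h ! t) (h ! Suc t))"
    unfolding hist_prob_def by (simp add: n prod.lessThan_Suc_shift del: prod.lessThan_Suc)
  then show ?thesis
    using \<open>h \<noteq> []\<close> by (simp add: hist_prob_def n hd_conv_nth)
qed

lemma hist_prob_nonneg: "stochastic_matrix p \<Longrightarrow> 0 \<le> hist_prob p h"
  unfolding hist_prob_def stochastic_matrix_def by (auto intro: prod_nonneg)

lemma hist_prob_pos_iff:
  assumes "stochastic_matrix p"
  shows "hist_prob p h > 0 \<longleftrightarrow> (\<forall>t<length h - 1. p (h ! t) (h ! Suc t) > 0)"
proof
  assume "hist_prob p h > 0"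
  then have "hist_prob p h \<noteq> 0" by simp
  then have "\<forall>t<length h - 1. p (h ! t) (h ! Suc t) \<noteq> 0"
    unfolding hist_prob_def by simp
  then show "\<forall>t<length h - 1. p (h ! t) (h ! Suc t) > 0"
    using assms unfolding stochastic_matrix_def by (simp add: less_le)
qed (auto simp: hist_prob_def intro: prod_pos)

lemma hist_prob_take_pos:
  "stochastic_matrix p \<Longrightarrow> hist_prob p h > 0 \<Longrightarrow> hist_prob p (take n h) > 0"
  by (auto simp: hist_prob_pos_iff)

lemma sum_histories_first_step:
  "(\<Sum>h\<in>histories (\<theta>::'q::finite) (Suc (Suc n)). hist_prob p h * F h)
     = (\<Sum>j\<in>UNIV. p \<theta> j * (\<Sum>h\<in>histories j (Suc n). hist_prob p h * F (\<theta> # h)))"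
  unfolding sum_histories_Suc_Suc sum_distrib_left
  by (intro sum.cong refl) (auto simp: hist_prob_Cons histories_def)

lemma sum_hist_prob:
  assumes "stochastic_matrix p"
  shows "(\<Sum>h\<in>histories \<theta> (Suc n). hist_prob p h) = 1"
proof (induction n arbitrary: \<theta>)
  case 0
  show ?case by (simp add: histories_Suc_0)
next
  case (Suc n)
  have "(\<Sum>h\<in>histories \<theta> (Suc (Suc n)). hist_prob p h)
      = (\<Sum>j\<in>UNIV. p \<theta> j * (\<Sum>h\<in>histories j (Suc n). hist_prob p h))"
    using sum_histories_first_step[where F = "\<lambda>_. 1"] by simp
  also have "\<dots> = 1"
    using Suc.IH assms by (simp add: stochastic_matrix_def)
  finally show ?case .
qed

lemma sum_histories_take:
  assumes "stochastic_matrix p"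
  shows "(\<Sum>h\<in>histories \<theta> (Suc (Suc n)). hist_prob p h * G (take (Suc n) h))
       = (\<Sum>h\<in>histories \<theta> (Suc n). hist_prob p h * G h)"
proof (induction n arbitrary: \<theta> G)
  case 0
  show ?case
    using assms
    by (simp add: sum_histories_first_step histories_Suc_0 stochastic_matrix_def
        flip: sum_distrib_right)
next
  case (Suc n)
  have "(\<Sum>h\<in>histories j (Suc (Suc n)). hist_prob p h * G (\<theta>' # take (Suc n) h))
      = (\<Sum>h\<in>histories j (Suc n). hist_prob p h * G (\<theta>' # h))" for \<theta>' j
    by (rule Suc.IH[where G = "\<lambda>h. G (\<theta>' # h)"])
  then show ?case
    by (simp add: sum_histories_first_step[where n = n] sum_histories_first_step[where n = "Suc n"])
qed

text \<open>\<open>cl_expect p f \<kappa> k g x \<theta>\<close> is \<open>\<bbbE>[g x\<^sub>k \<theta>\<^sub>k]\<close> for the closed loop started at \<open>(x, \<theta>)\<close>,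
  computed backwards by conditioning on the first transition.\<close>

fun cl_expect :: "('q::finite \<Rightarrow> 'q \<Rightarrow> real) \<Rightarrow> ('x \<Rightarrow> 'u \<Rightarrow> 'q \<Rightarrow> 'x) \<Rightarrow> ('x \<Rightarrow> 'q \<Rightarrow> 'u)
    \<Rightarrow> nat \<Rightarrow> ('x \<Rightarrow> 'q \<Rightarrow> real) \<Rightarrow> 'x \<Rightarrow> 'q \<Rightarrow> real" where
  "cl_expect p f \<kappa> 0 g x \<theta> = g x \<theta>"
| "cl_expect p f \<kappa> (Suc k) g x \<theta> = (\<Sum>j\<in>UNIV. p \<theta> j * cl_expect p f \<kappa> k g (f x (\<kappa> x \<theta>) \<theta>) j)"

lemma cl_traj_Cons: "cl_traj f \<kappa> x (\<theta> # h) (Suc k) = cl_traj f \<kappa> (f x (\<kappa> x \<theta>) \<theta>) h k"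
  by (induction k) auto

lemma sum_histories_cl_traj:
  "(\<Sum>h\<in>histories \<theta> (Suc k). hist_prob p h * g (cl_traj f \<kappa> x h k) (h ! k)) = cl_expect p f \<kappa> k g x \<theta>"
proof (induction k arbitrary: x \<theta>)
  case 0
  show ?case by (simp add: histories_Suc_0)
next
  case (Suc k)
  show ?case
    by (simp add: sum_histories_first_step cl_traj_Cons Suc.IH del: cl_traj.simps)
qed

lemma cl_expect_Suc_inner:
  "cl_expect p f \<kappa> (Suc k) g x \<theta> = cl_expect p f \<kappa> k (cl_expect p f \<kappa> (Suc 0) g) x \<theta>"
  by (induction k arbitrary: x \<theta>) simp_all

lemma cl_expect_mono:
  assumes "stochastic_matrix p"
    and invariant: "\<And>x \<theta> j. (x, \<theta>) \<in> S \<Longrightarrow> p \<theta> j > 0 \<Longrightarrow> (f x (\<kappa> x \<theta>) \<theta>, j) \<in> S"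
    and le: "\<And>x \<theta>. (x, \<theta>) \<in> S \<Longrightarrow> g x \<theta> \<le> g' x \<theta>"
    and "(x, \<theta>) \<in> S"
  shows "cl_expect p f \<kappa> k g x \<theta> \<le> cl_expect p f \<kappa> k g' x \<theta>"
  using \<open>(x, \<theta>) \<in> S\<close>
proof (induction k arbitrary: x \<theta>)
  case 0
  then show ?case using le by simp
next
  case (Suc k)
  have "p \<theta> j * cl_expect p f \<kappa> k g (f x (\<kappa> x \<theta>) \<theta>) j
      \<le> p \<theta> j * cl_expect p f \<kappa> k g' (f x (\<kappa> x \<theta>) \<theta>) j" for j
  proof (cases "p \<theta> j > 0")
    case True
    then show ?thesis using Suc invariant by (intro mult_left_mono) auto
  next
    case False
    then have "p \<theta> j = 0" using assms(1) by (simp add: stochastic_matrix_def less_le)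
    then show ?thesis by simp
  qed
  then show ?case by (simp add: sum_mono)
qed

lemma cl_expect_diff:
  "cl_expect p f \<kappa> k (\<lambda>x \<theta>. g x \<theta> - g' x \<theta>) x \<theta> = cl_expect p f \<kappa> k g x \<theta> - cl_expect p f \<kappa> k g' x \<theta>"
  by (induction k arbitrary: x \<theta>) (simp_all add: right_diff_distrib sum_subtractf)

lemma cl_expect_const_mult:
  "cl_expect p f \<kappa> k (\<lambda>x \<theta>. c * g x \<theta>) x \<theta> = c * cl_expect p f \<kappa> k g x \<theta>"
  by (induction k arbitrary: x \<theta>) (simp_all add: sum_distrib_left mult.left_commute)

lemma cl_expect_const: "stochastic_matrix p \<Longrightarrow> cl_expect p f \<kappa> k (\<lambda>_ _. c) x \<theta> = c"
  by (induction k arbitrary: x \<theta>) (simp_all add: stochastic_matrix_def flip: sum_distrib_right)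

lemma cl_expect_nonneg:
  assumes "stochastic_matrix p" and "\<And>x \<theta>. 0 \<le> g x \<theta>"
  shows "0 \<le> cl_expect p f \<kappa> k g x \<theta>"
  using cl_expect_mono[OF assms(1), where S = UNIV and g = "\<lambda>_ _. 0" and g' = g] assms
  by (simp add: cl_expect_const)

lemma summable_cl_expect_Lyapunov:
  assumes sm: "stochastic_matrix p"
    and invariant: "\<And>x \<theta> j. (x, \<theta>) \<in> D \<Longrightarrow> p \<theta> j > 0 \<Longrightarrow> (f x (\<kappa> x \<theta>) \<theta>, j) \<in> D"
    and bounded: "\<And>x \<theta>. (x, \<theta>) \<in> D \<Longrightarrow> m \<le> L x \<theta>"
    and decrease: "\<And>x \<theta>. (x, \<theta>) \<in> D \<Longrightarrow> (\<Sum>j\<in>UNIV. p \<theta> j * L (f x (\<kappa> x \<theta>) \<theta>) j) \<le> L x \<theta> - \<rho> x \<theta>"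
    and \<rho>_nonneg: "\<And>x \<theta>. 0 \<le> \<rho> x \<theta>"
    and start: "(x0, \<theta>0) \<in> D"
  shows "summable (\<lambda>k. cl_expect p f \<kappa> k \<rho> x0 \<theta>0)"
proof (rule summableI_nonneg_bounded)
  let ?E = "\<lambda>k g. cl_expect p f \<kappa> k g x0 \<theta>0"
  show "0 \<le> ?E k \<rho>" for k
    by (rule cl_expect_nonneg[OF sm \<rho>_nonneg])
  have step: "?E k \<rho> \<le> ?E k L - ?E (Suc k) L" for k
  proof -
    have "?E (Suc k) L = ?E k (cl_expect p f \<kappa> (Suc 0) L)"
      by (rule cl_expect_Suc_inner)
    also have "\<dots> \<le> ?E k (\<lambda>x \<theta>. L x \<theta> - \<rho> x \<theta>)"
      by (rule cl_expect_mono[OF sm, where S = D]) (use invariant decrease start in auto)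
    finally show ?thesis by (simp add: cl_expect_diff)
  qed
  have lower: "m \<le> ?E k L" for k
  proof -
    have "?E k (\<lambda>_ _. m) \<le> ?E k L"
      by (rule cl_expect_mono[OF sm, where S = D]) (use invariant bounded start in auto)
    then show ?thesis by (simp add: cl_expect_const[OF sm])
  qed
  show "(\<Sum>k<K. ?E k \<rho>) \<le> L x0 \<theta>0 - m" for K
  proof -
    have "(\<Sum>k<K. ?E k \<rho>) \<le> (\<Sum>k<K. ?E k L - ?E (Suc k) L)"
      by (intro sum_mono step)
    also have "\<dots> = ?E 0 L - ?E K L"
      by (rule sum_lessThan_telescope')
    finally show ?thesis using lower[of K] by simp
  qed
qed

lemma traj_take: "k \<le> m \<Longrightarrow> traj f x \<pi> (take m h) k = traj f x \<pi> h k"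
  by (induction k) (auto simp: min_def)

text \<open>The candidate solution at the successor state: drop the first stage of \<open>\<pi>\<close>, whose
  histories all start in \<open>\<theta>\<close>, and apply the equilibrium input \<open>ue\<close> at the new last stage.\<close>

definition shift_policy :: "nat \<Rightarrow> 'u \<Rightarrow> 'q \<Rightarrow> ('q list \<Rightarrow> 'u) \<Rightarrow> 'q list \<Rightarrow> 'u" where
  "shift_policy N ue \<theta> \<pi> h = (if length h < N then \<pi> (\<theta> # h) else ue)"

definition tail_cost ::
  "('x \<Rightarrow> 'u \<Rightarrow> 'q \<Rightarrow> 'x) \<Rightarrow> ('x \<Rightarrow> 'u \<Rightarrow> 'q \<Rightarrow> real) \<Rightarrow> 'x \<Rightarrow> ('q list \<Rightarrow> 'u) \<Rightarrow> nat \<Rightarrow> 'q list \<Rightarrow> real"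
  where
  "tail_cost f l x \<pi> M h = (\<Sum>k<M. l (traj f x \<pi> h (Suc k)) (\<pi> (take (Suc (Suc k)) h)) (h ! Suc k))"

lemma tail_cost_take: "tail_cost f l x \<pi> M (take (Suc M) h) = tail_cost f l x \<pi> M h"
  unfolding tail_cost_def by (intro sum.cong refl) (auto simp: traj_take min_def)

lemma traj_shift_policy:
  "k < N \<Longrightarrow> traj f (f x (\<pi> [\<theta>]) \<theta>) (shift_policy N ue \<theta> \<pi>) h k = traj f x \<pi> (\<theta> # h) (Suc k)"
  by (induction k) (auto simp: shift_policy_def)

lemma history_Cons_take:
  assumes "stochastic_matrix p" "N = Suc M" "p \<theta> j > 0"
    and "h \<in> histories j N" "hist_prob p h > 0"
  shows "take N (\<theta> # h) \<in> histories \<theta> N" "hist_prob p (take N (\<theta> # h)) > 0"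
proof -
  have "hist_prob p (\<theta> # h) > 0"
    using assms(3-5) by (auto simp: histories_def hist_prob_Cons)
  then show "hist_prob p (take N (\<theta> # h)) > 0"
    by (rule hist_prob_take_pos[OF assms(1)])
  show "take N (\<theta> # h) \<in> histories \<theta> N"
    using assms(2,4) by (auto simp: histories_def)
qed

lemma traj_shift_policy_terminal:
  assumes "stochastic_matrix p" and xs: "\<And>\<theta>. xs \<theta> = z" and N: "N = Suc M"
    and feas: "empc_feasible p f Y xs bet N x \<theta> \<pi>" and "p \<theta> j > 0"
    and "h \<in> histories j N" "hist_prob p h > 0"
  shows "traj f (f x (\<pi> [\<theta>]) \<theta>) (shift_policy N ue \<theta> \<pi>) h M = z"
proof -
  note h = history_Cons_take[OF assms(1) N assms(5-7)]
  have "traj f x \<pi> (take N (\<theta> # h)) N = z"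
    using feas h xs by (auto simp: empc_feasible_def)
  moreover have "traj f x \<pi> (take N (\<theta> # h)) N = traj f x \<pi> (\<theta> # h) (Suc M)"
    unfolding N by (rule traj_take) simp
  ultimately show ?thesis
    using N by (simp add: traj_shift_policy)
qed

lemma empc_feasible_shift_policy:
  assumes sm: "stochastic_matrix p" and N: "N = Suc M"
    and xs: "\<And>\<theta>. xs \<theta> = z" and Y: "\<And>\<theta>. (z, ue) \<in> Y \<theta>" and f: "\<And>\<theta>. f z ue \<theta> = z"
    and feas: "empc_feasible p f Y xs bet N x \<theta> \<pi>" and pj: "p \<theta> j > 0"
  shows "empc_feasible p f Y xs bet N (f x (\<pi> [\<theta>]) \<theta>) j (shift_policy N ue \<theta> \<pi>)"
  unfolding empc_feasible_def
proof (intro ballI impI conjI allI)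
  fix h k assume h: "h \<in> histories j N" "hist_prob p h > 0" and "k < N"
  note h' = history_Cons_take[OF sm N pj h]
  have len: "length h = N" using h(1) by (simp add: histories_def)
  show "(traj f (f x (\<pi> [\<theta>]) \<theta>) (shift_policy N ue \<theta> \<pi>) h k,
         shift_policy N ue \<theta> \<pi> (take (Suc k) h)) \<in> Y (h ! k)"
  proof (cases "k < M")
    case True
    have "\<forall>i<N. (traj f x \<pi> (take N (\<theta> # h)) i, \<pi> (take (Suc i) (take N (\<theta> # h))))
            \<in> Y (take N (\<theta> # h) ! i)"
      using feas h' unfolding empc_feasible_def by blast
    then have "(traj f x \<pi> (take N (\<theta> # h)) (Suc k), \<pi> (take (Suc (Suc k)) (take N (\<theta> # h))))
            \<in> Y (take N (\<theta> # h) ! Suc k)"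
      using True N by blast
    moreover have "traj f x \<pi> (take N (\<theta> # h)) (Suc k) = traj f x \<pi> (\<theta> # h) (Suc k)"
      using True N by (intro traj_take) simp
    ultimately show ?thesis
      using True N len by (simp add: traj_shift_policy shift_policy_def del: traj.simps)
  next
    case False
    then have "k = M" using \<open>k < N\<close> N by simp
    then show ?thesis
      using traj_shift_policy_terminal[OF sm xs N feas pj h] Y len N by (simp add: shift_policy_def)
  qed
next
  fix h assume h: "h \<in> histories j N" "hist_prob p h > 0"
  have len: "length h = N" using h(1) by (simp add: histories_def)
  show "traj f (f x (\<pi> [\<theta>]) \<theta>) (shift_policy N ue \<theta> \<pi>) h N = xs (bet (h ! (N - 1)))"
    using traj_shift_policy_terminal[OF sm xs N feas pj h] len N xs f
    by (simp add: shift_policy_def)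
qed

lemma empc_cost_first_stage:
  assumes sm: "stochastic_matrix p" and N: "N = Suc M"
  shows "empc_cost p f l N x \<theta> \<pi>
           = l x (\<pi> [\<theta>]) \<theta> + (\<Sum>h\<in>histories \<theta> N. hist_prob p h * tail_cost f l x \<pi> M h)"
proof -
  have "(\<Sum>k<N. l (traj f x \<pi> h k) (\<pi> (take (Suc k) h)) (h ! k))
          = l x (\<pi> [\<theta>]) \<theta> + tail_cost f l x \<pi> M h" if h: "h \<in> histories \<theta> N" for h
  proof -
    obtain t where "h = \<theta> # t" using h N by (cases h) (auto simp: histories_def)
    then show ?thesis unfolding N tail_cost_def by (simp add: sum.lessThan_Suc_shift del: sum.lessThan_Suc)
  qed
  then have "empc_cost p f l N x \<theta> \<pi>
      = (\<Sum>h\<in>histories \<theta> N. hist_prob p h * l x (\<pi> [\<theta>]) \<theta> + hist_prob p h * tail_cost f l x \<pi> M h)"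
    unfolding empc_cost_def by (simp add: distrib_left)
  also have "\<dots> = l x (\<pi> [\<theta>]) \<theta> + (\<Sum>h\<in>histories \<theta> N. hist_prob p h * tail_cost f l x \<pi> M h)"
    using sum_hist_prob[OF sm] N by (simp add: sum.distrib flip: sum_distrib_right)
  finally show ?thesis .
qed

lemma empc_cost_shift_policy:
  assumes sm: "stochastic_matrix p" and N: "N = Suc M"
    and xs: "\<And>\<theta>. xs \<theta> = z" and l: "\<And>\<theta>. l z ue \<theta> = ls"
    and feas: "empc_feasible p f Y xs bet N x \<theta> \<pi>" and pj: "p \<theta> j > 0"
  shows "empc_cost p f l N (f x (\<pi> [\<theta>]) \<theta>) j (shift_policy N ue \<theta> \<pi>)
           = (\<Sum>h\<in>histories j N. hist_prob p h * tail_cost f l x \<pi> M (\<theta> # h)) + ls"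
proof -
  let ?x1 = "f x (\<pi> [\<theta>]) \<theta>" and ?\<pi>1 = "shift_policy N ue \<theta> \<pi>"
  have stages: "(\<Sum>k<N. l (traj f ?x1 ?\<pi>1 h k) (?\<pi>1 (take (Suc k) h)) (h ! k))
                  = tail_cost f l x \<pi> M (\<theta> # h) + ls"
    if h: "h \<in> histories j N" "hist_prob p h > 0" for h
  proof -
    have len: "length h = N" using h(1) by (simp add: histories_def)
    have "(\<Sum>k<M. l (traj f ?x1 ?\<pi>1 h k) (?\<pi>1 (take (Suc k) h)) (h ! k))
            = tail_cost f l x \<pi> M (\<theta> # h)"
      unfolding tail_cost_def
      by (intro sum.cong refl) (use N len in \<open>simp add: traj_shift_policy shift_policy_def del: traj.simps\<close>)
    moreover have "l (traj f ?x1 ?\<pi>1 h M) (?\<pi>1 (take (Suc M) h)) (h ! M) = ls"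
      using traj_shift_policy_terminal[OF sm xs N feas pj h] l len N by (simp add: shift_policy_def)
    ultimately show ?thesis unfolding N by simp
  qed
  have "empc_cost p f l N ?x1 j ?\<pi>1
          = (\<Sum>h\<in>histories j N. hist_prob p h * (tail_cost f l x \<pi> M (\<theta> # h) + ls))"
    unfolding empc_cost_def
  proof (intro sum.cong refl)
    fix h assume "h \<in> histories j N"
    then show "hist_prob p h * (\<Sum>k<N. l (traj f ?x1 ?\<pi>1 h k) (?\<pi>1 (take (Suc k) h)) (h ! k))
                 = hist_prob p h * (tail_cost f l x \<pi> M (\<theta> # h) + ls)"
      using stages hist_prob_nonneg[OF sm, of h] by (cases "hist_prob p h = 0") auto
  qed
  also have "\<dots> = (\<Sum>h\<in>histories j N. hist_prob p h * tail_cost f l x \<pi> M (\<theta> # h)) + ls"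
    using sum_hist_prob[OF sm] N by (simp add: distrib_left sum.distrib flip: sum_distrib_right)
  finally show ?thesis .
qed

lemma sum_tail_cost_Cons:
  assumes sm: "stochastic_matrix p" and N: "N = Suc M"
  shows "(\<Sum>j\<in>UNIV. p \<theta> j * (\<Sum>h\<in>histories j N. hist_prob p h * tail_cost f l x \<pi> M (\<theta> # h)))
       = (\<Sum>h\<in>histories \<theta> N. hist_prob p h * tail_cost f l x \<pi> M h)"
proof -
  have "(\<Sum>j\<in>UNIV. p \<theta> j * (\<Sum>h\<in>histories j N. hist_prob p h * tail_cost f l x \<pi> M (\<theta> # h)))
      = (\<Sum>h\<in>histories \<theta> (Suc (Suc M)). hist_prob p h * tail_cost f l x \<pi> M (take (Suc M) h))"
    unfolding N tail_cost_take by (rule sum_histories_first_step[symmetric])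
  also have "\<dots> = (\<Sum>h\<in>histories \<theta> N. hist_prob p h * tail_cost f l x \<pi> M h)"
    unfolding N by (rule sum_histories_take[OF sm])
  finally show ?thesis .
qed

lemma empc_cost_decrease:
  assumes sm: "stochastic_matrix p" and N: "N = Suc M"
    and xs: "\<And>\<theta>. xs \<theta> = z" and Y: "\<And>\<theta>. (z, ue) \<in> Y \<theta>"
    and f: "\<And>\<theta>. f z ue \<theta> = z" and l: "\<And>\<theta>. l z ue \<theta> = ls"
    and feas: "empc_feasible p f Y xs bet N x \<theta> \<pi>"
    and opt: "\<And>j. p \<theta> j > 0 \<Longrightarrow> empc_optimal p f l Y xs bet N (f x (\<pi> [\<theta>]) \<theta>) j (\<pi>' j)"
  shows "(\<Sum>j\<in>UNIV. p \<theta> j * empc_cost p f l N (f x (\<pi> [\<theta>]) \<theta>) j (\<pi>' j))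
           \<le> empc_cost p f l N x \<theta> \<pi> - l x (\<pi> [\<theta>]) \<theta> + ls"
proof -
  define Q where "Q j = (\<Sum>h\<in>histories j N. hist_prob p h * tail_cost f l x \<pi> M (\<theta> # h))" for j
  have "p \<theta> j * empc_cost p f l N (f x (\<pi> [\<theta>]) \<theta>) j (\<pi>' j) \<le> p \<theta> j * (Q j + ls)" for j
  proof (cases "p \<theta> j > 0")
    case True
    have "empc_cost p f l N (f x (\<pi> [\<theta>]) \<theta>) j (\<pi>' j)
            \<le> empc_cost p f l N (f x (\<pi> [\<theta>]) \<theta>) j (shift_policy N ue \<theta> \<pi>)"
      using opt[OF True] empc_feasible_shift_policy[OF sm N xs Y f feas True]
      unfolding empc_optimal_def by blast
    also have "\<dots> = Q j + ls"
      unfolding Q_def by (rule empc_cost_shift_policy[where xs = xs and l = l, OF sm N xs l feas True])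
    finally show ?thesis using True by simp
  next
    case False
    then have "p \<theta> j = 0" using sm by (simp add: stochastic_matrix_def less_le)
    then show ?thesis by simp
  qed
  then have "(\<Sum>j\<in>UNIV. p \<theta> j * empc_cost p f l N (f x (\<pi> [\<theta>]) \<theta>) j (\<pi>' j))
               \<le> (\<Sum>j\<in>UNIV. p \<theta> j * Q j) + (\<Sum>j\<in>UNIV. p \<theta> j) * ls"
    by (simp add: sum_mono distrib_left sum.distrib sum_distrib_right flip: sum.distrib)
  also have "\<dots> = empc_cost p f l N x \<theta> \<pi> - l x (\<pi> [\<theta>]) \<theta> + ls"
    using sm unfolding Q_def sum_tail_cost_Cons[OF sm N] empc_cost_first_stage[OF sm N]
    by (simp add: stochastic_matrix_def)
  finally show ?thesis .
qed

lemma empc_domain_closed_loop_invariant: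
  assumes sm: "stochastic_matrix p" and N: "N = Suc M"
    and xs: "\<And>\<theta>. xs \<theta> = z" and Y: "\<And>\<theta>. (z, ue) \<in> Y \<theta>" and f: "\<And>\<theta>. f z ue \<theta> = z"
    and kappa: "\<And>x \<theta>. (x, \<theta>) \<in> empc_domain p f Y xs bet N \<Longrightarrow>
                  \<exists>\<pi>. empc_optimal p f l Y xs bet N x \<theta> \<pi> \<and> \<pi> [\<theta>] = \<kappa> x \<theta>"
    and dom: "(x, \<theta>) \<in> empc_domain p f Y xs bet N" and pj: "p \<theta> j > 0"
  shows "(f x (\<kappa> x \<theta>) \<theta>, j) \<in> empc_domain p f Y xs bet N"
proof -
  obtain \<pi> where opt: "empc_optimal p f l Y xs bet N x \<theta> \<pi>" and first: "\<pi> [\<theta>] = \<kappa> x \<theta>"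
    using kappa[OF dom] by blast
  have "empc_feasible p f Y xs bet N (f x (\<pi> [\<theta>]) \<theta>) j (shift_policy N ue \<theta> \<pi>)"
    using opt by (intro empc_feasible_shift_policy[where xs = xs and Y = Y and f = f, OF sm N xs Y f _ pj]) (simp add: empc_optimal_def)
  then show ?thesis
    using first unfolding empc_domain_def by auto
qed

lemma empc_optimal_value_decrease:
  assumes sm: "stochastic_matrix p" and N: "N = Suc M"
    and xs: "\<And>\<theta>. xs \<theta> = z" and Y: "\<And>\<theta>. (z, ue) \<in> Y \<theta>"
    and f: "\<And>\<theta>. f z ue \<theta> = z" and l: "\<And>\<theta>. l z ue \<theta> = ls"
    and l_nonneg: "\<And>x u \<theta>. 0 \<le> l x u \<theta>"
    and kappa: "\<And>x \<theta>. (x, \<theta>) \<in> empc_domain p f Y xs bet N \<Longrightarrow>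
                  \<exists>\<pi>. empc_optimal p f l Y xs bet N x \<theta> \<pi> \<and> \<pi> [\<theta>] = \<kappa> x \<theta>"
  obtains V where "\<And>x \<theta>. 0 \<le> V x \<theta>"
    and "\<And>x \<theta>. (x, \<theta>) \<in> empc_domain p f Y xs bet N \<Longrightarrow>
           (\<Sum>j\<in>UNIV. p \<theta> j * V (f x (\<kappa> x \<theta>) \<theta>) j) \<le> V x \<theta> - l x (\<kappa> x \<theta>) \<theta> + ls"
proof
  let ?D = "empc_domain p f Y xs bet N"
  define \<pi>o where "\<pi>o x \<theta> = (SOME \<pi>. empc_optimal p f l Y xs bet N x \<theta> \<pi> \<and> \<pi> [\<theta>] = \<kappa> x \<theta>)" for x \<theta>
  have \<pi>o: "empc_optimal p f l Y xs bet N x \<theta> (\<pi>o x \<theta>)" "\<pi>o x \<theta> [\<theta>] = \<kappa> x \<theta>"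
    if "(x, \<theta>) \<in> ?D" for x \<theta>
    using someI_ex[OF kappa[OF that]] unfolding \<pi>o_def by auto
  define V where "V x \<theta> = empc_cost p f l N x \<theta> (\<pi>o x \<theta>)" for x \<theta>
  show "0 \<le> V x \<theta>" for x \<theta>
    unfolding V_def empc_cost_def
    by (intro sum_nonneg mult_nonneg_nonneg hist_prob_nonneg[OF sm] l_nonneg)
  show "(\<Sum>j\<in>UNIV. p \<theta> j * V (f x (\<kappa> x \<theta>) \<theta>) j) \<le> V x \<theta> - l x (\<kappa> x \<theta>) \<theta> + ls"
    if dom: "(x, \<theta>) \<in> ?D" for x \<theta>
  proof -
    have "(f x (\<kappa> x \<theta>) \<theta>, j) \<in> ?D" if "p \<theta> j > 0" for j
      by (rule empc_domain_closed_loop_invariant[OF sm N xs Y f kappa dom that])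
    then have "(\<Sum>j\<in>UNIV. p \<theta> j * V (f x (\<pi>o x \<theta> [\<theta>]) \<theta>) j)
                 \<le> V x \<theta> - l x (\<pi>o x \<theta> [\<theta>]) \<theta> + ls"
      unfolding V_def using \<pi>o[OF dom] \<pi>o(1)
      by (intro empc_cost_decrease[where xs = xs and Y = Y and f = f and l = l,
            OF sm N xs Y f l]) (auto simp: empc_optimal_def)
    then show ?thesis using \<pi>o(2)[OF dom] by simp
  qed
qed

lemma empc_domain_subset_constraint_states:
  assumes "stochastic_matrix p" and "N = Suc M" and "(x, \<theta>) \<in> empc_domain p f Y xs bet N"
  shows "x \<in> fst ` Y \<theta>"
proof -
  obtain \<pi> where feas: "empc_feasible p f Y xs bet N x \<theta> \<pi>"
    using assms(3) unfolding empc_domain_def by blast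
  have "(\<Sum>h\<in>histories \<theta> N. hist_prob p h) = 1"
    using sum_hist_prob[OF assms(1)] assms(2) by simp
  then obtain h where h: "h \<in> histories \<theta> N" "hist_prob p h > 0"
    using hist_prob_nonneg[OF assms(1)] by (metis less_eq_real_def sum.neutral zero_neq_one)
  then have "(x, \<pi> (take 1 h)) \<in> Y (h ! 0)"
    using feas assms(2) unfolding empc_feasible_def by fastforce
  moreover have "h ! 0 = \<theta>"
    using h(1) by (auto simp: histories_def hd_conv_nth)
  ultimately show ?thesis by force
qed

lemma lsc_bounded_below_on_compact:
  fixes g :: "'a::topological_space \<Rightarrow> real"
  assumes K: "compact K" and g: "lsc g"
  shows "\<exists>b. \<forall>x\<in>K. b \<le> g x"
proof -
  have "\<exists>U. open U \<and> x \<in> U \<and> (\<forall>y\<in>U. g x - 1 < g y)" for x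
    using g[unfolded lsc_def eventually_nhds, rule_format, of "g x - 1" x] by simp
  then obtain U where U: "\<And>x. open (U x)" "\<And>x. x \<in> U x" "\<And>x y. y \<in> U x \<Longrightarrow> g x - 1 < g y"
    by metis
  obtain C where C: "C \<subseteq> K" "finite C" "K \<subseteq> (\<Union>c\<in>C. U c)"
    using compactE_image[OF K, of K U] U(1,2) by blast
  have "- (\<Sum>c\<in>C. \<bar>g c\<bar> + 1) \<le> g y" if "y \<in> K" for y
  proof -
    obtain c where c: "c \<in> C" "y \<in> U c" using C(3) \<open>y \<in> K\<close> by blast
    have "\<bar>g c\<bar> + 1 \<le> (\<Sum>c\<in>C. \<bar>g c\<bar> + 1)"
      by (rule member_le_sum) (use c C in auto)
    then show ?thesis using U(3)[OF c(2)] by linarith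
  qed
  then show ?thesis by blast
qed

lemma lsc_family_bounded_below_on_compact:
  fixes g :: "'a::topological_space \<Rightarrow> 'q::finite \<Rightarrow> real"
  assumes "\<And>\<theta>. compact (K \<theta>)" and "\<And>\<theta>. lsc (\<lambda>x. g x \<theta>)"
  obtains b where "\<And>\<theta> x. x \<in> K \<theta> \<Longrightarrow> b \<le> g x \<theta>"
proof -
  have "\<forall>\<theta>. \<exists>b. \<forall>x\<in>K \<theta>. b \<le> g x \<theta>"
    using lsc_bounded_below_on_compact assms by blast
  then obtain b where b: "\<And>\<theta> x. x \<in> K \<theta> \<Longrightarrow> b \<theta> \<le> g x \<theta>"
    by metis
  show ?thesis
  proof (rule that[of "Min (range b)"])
    fix \<theta> x assume "x \<in> K \<theta>"
    have "Min (range b) \<le> b \<theta>" by (simp add: Min_le)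
    then show "Min (range b) \<le> g x \<theta>" using b[OF \<open>x \<in> K \<theta>\<close>] by linarith
  qed
qed

lemma summable_cl_expect_dominated:
  assumes sm: "stochastic_matrix p" and summable: "summable (\<lambda>k. cl_expect p f \<kappa> k \<rho> x \<theta>)"
    and "c > 0" and g_nonneg: "\<And>x \<theta>. 0 \<le> g x \<theta>" and le: "\<And>x \<theta>. c * g x \<theta> \<le> \<rho> x \<theta>"
  shows "summable (\<lambda>k. cl_expect p f \<kappa> k g x \<theta>)"
proof (rule summable_comparison_test'[OF summable_divide[OF summable, of c]])
  fix k
  have "c * cl_expect p f \<kappa> k g x \<theta> \<le> cl_expect p f \<kappa> k \<rho> x \<theta>"
    unfolding cl_expect_const_mult[symmetric]
    by (rule cl_expect_mono[OF sm, where S = UNIV]) (use le in auto)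
  moreover have "0 \<le> cl_expect p f \<kappa> k g x \<theta>"
    by (rule cl_expect_nonneg[OF sm g_nonneg])
  ultimately show "norm (cl_expect p f \<kappa> k g x \<theta>) \<le> cl_expect p f \<kappa> k \<rho> x \<theta> / c"
    using \<open>c > 0\<close> by (simp add: pos_le_divide_eq mult.commute)
qed

lemma empc_summable_cl_expect_dissipation:
  fixes Y :: "'q::finite \<Rightarrow> ('x::topological_space \<times> 'u::topological_space) set"
  assumes sm: "stochastic_matrix p" and N: "N = Suc M"
    and xs: "\<And>\<theta>. xs \<theta> = z" and Y: "\<And>\<theta>. (z, ue) \<in> Y \<theta>"
    and f: "\<And>\<theta>. f z ue \<theta> = z" and l: "\<And>\<theta>. l z ue \<theta> = ls"
    and l_nonneg: "\<And>x u \<theta>. 0 \<le> l x u \<theta>" and Y_compact: "\<And>\<theta>. compact (Y \<theta>)"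
    and lam_lsc: "\<And>\<theta>. lsc (\<lambda>x. lam x \<theta>)"
    and diss: "\<And>x u \<theta>. (\<Sum>j\<in>UNIV. p \<theta> j * lam (f x u \<theta>) j) - lam x \<theta> \<le> l x u \<theta> - ls - \<rho> x \<theta>"
    and \<rho>_nonneg: "\<And>x \<theta>. 0 \<le> \<rho> x \<theta>"
    and kappa: "\<And>x \<theta>. (x, \<theta>) \<in> empc_domain p f Y xs bet N \<Longrightarrow>
                  \<exists>\<pi>. empc_optimal p f l Y xs bet N x \<theta> \<pi> \<and> \<pi> [\<theta>] = \<kappa> x \<theta>"
    and init: "(x0, \<theta>0) \<in> empc_domain p f Y xs bet N"
  shows "summable (\<lambda>k. cl_expect p f \<kappa> k \<rho> x0 \<theta>0)"
proof -
  let ?D = "empc_domain p f Y xs bet N"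
  obtain V where V_nonneg: "\<And>x \<theta>. 0 \<le> V x \<theta>"
    and V_decrease: "\<And>x \<theta>. (x, \<theta>) \<in> ?D \<Longrightarrow>
           (\<Sum>j\<in>UNIV. p \<theta> j * V (f x (\<kappa> x \<theta>) \<theta>) j) \<le> V x \<theta> - l x (\<kappa> x \<theta>) \<theta> + ls"
    using empc_optimal_value_decrease[OF sm N xs Y f l l_nonneg kappa] by blast
  have "compact (fst ` Y \<theta>)" for \<theta>
    using Y_compact by (intro compact_continuous_image continuous_intros)
  then obtain b where b: "\<And>\<theta> x. x \<in> fst ` Y \<theta> \<Longrightarrow> b \<le> lam x \<theta>"
    using lsc_family_bounded_below_on_compact[where K = "\<lambda>\<theta>. fst ` Y \<theta>" and g = lam] lam_lsc
    by blast
  show ?thesis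
  proof (rule summable_cl_expect_Lyapunov[OF sm, where D = ?D and L = "\<lambda>x \<theta>. V x \<theta> + lam x \<theta>"])
    show "(f x (\<kappa> x \<theta>) \<theta>, j) \<in> ?D" if "(x, \<theta>) \<in> ?D" "p \<theta> j > 0" for x \<theta> j
      by (rule empc_domain_closed_loop_invariant[OF sm N xs Y f kappa that])
    show "b \<le> V x \<theta> + lam x \<theta>" if "(x, \<theta>) \<in> ?D" for x \<theta>
      using V_nonneg[of x \<theta>] b[OF empc_domain_subset_constraint_states[OF sm N that]] by linarith
    show "(\<Sum>j\<in>UNIV. p \<theta> j * (V (f x (\<kappa> x \<theta>) \<theta>) j + lam (f x (\<kappa> x \<theta>) \<theta>) j))
            \<le> V x \<theta> + lam x \<theta> - \<rho> x \<theta>" if "(x, \<theta>) \<in> ?D" for x \<theta>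
      using V_decrease[OF that] diss[where x = x and u = "\<kappa> x \<theta>" and \<theta> = \<theta>]
      by (simp add: distrib_left sum.distrib)
  qed (use \<rho>_nonneg init in auto)
qed

theorem theorem2:
  fixes p :: "'q::finite \<Rightarrow> 'q \<Rightarrow> real"
    and f :: "(real^'n) \<Rightarrow> (real^'m) \<Rightarrow> 'q \<Rightarrow> (real^'n)"
    and l :: "(real^'n) \<Rightarrow> (real^'m) \<Rightarrow> 'q \<Rightarrow> real"
    and Y :: "'q \<Rightarrow> ((real^'n) \<times> (real^'m)) set"
    and xs :: "'q \<Rightarrow> (real^'n)" and us :: "'q \<Rightarrow> (real^'m)"
    and bet :: "'q \<Rightarrow> 'q"
    and ls lams \<gamma> :: real
    and lam \<rho> :: "(real^'n) \<Rightarrow> 'q \<Rightarrow> real"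
    and N :: nat
    and \<kappa> :: "(real^'n) \<Rightarrow> 'q \<Rightarrow> (real^'m)"
    and x0 :: "(real^'n)" and \<theta>0 :: 'q
  assumes chain: "stochastic_matrix p" "irreducible_chain p" "aperiodic_chain p"
    and bet: "is_bet p bet"
    and l_nonneg: "\<And>x u \<theta>. 0 \<le> l x u \<theta>"
    and l_lsc: "\<And>\<theta>. lsc (\<lambda>(x, u). l x u \<theta>)"
    and l_lb: "\<And>\<theta>. level_bounded_loc_unif (\<lambda>x u. l x u \<theta>)"
    and f_cont: "\<And>\<theta>. continuous_on UNIV (\<lambda>(x, u). f x u \<theta>)"
    and Y_ne: "\<And>\<theta>. Y \<theta> \<noteq> {}" and Y_compact: "\<And>\<theta>. compact (Y \<theta>)"
    and oss: "\<And>\<theta>. opt_steady_state f l Y \<theta> (xs \<theta>) (us \<theta>)"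
    and common: "\<And>\<theta>. xs \<theta> = 0" "\<And>\<theta>. us \<theta> = 0"
    and l_s: "\<And>\<theta>. l 0 0 \<theta> = ls"
    and ctrl: "\<And>i j. \<exists>u. (xs i, u) \<in> Y j \<and> f (xs i) u j = xs (bet j)"
    and lam_lsc: "\<And>\<theta>. lsc (\<lambda>x. lam x \<theta>)"
    and lam_s: "\<And>\<theta>. lam (xs \<theta>) \<theta> = lams"
    and rho_nonneg: "\<And>x \<theta>. 0 \<le> \<rho> x \<theta>"
    and rho_convex: "\<And>\<theta>. convex_on UNIV (\<lambda>x. \<rho> x \<theta>)"
    and rho_pd: "\<And>\<theta>. \<rho> (xs \<theta>) \<theta> = 0" "\<And>x \<theta>. x \<noteq> xs \<theta> \<Longrightarrow> 0 < \<rho> x \<theta>"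
    and diss: "\<And>x u \<theta>. (\<Sum>j\<in>UNIV. p \<theta> j * lam (f x u \<theta>) j) - lam x \<theta>
                         \<le> l x u \<theta> - ls - \<rho> x \<theta>"
    and gamma: "\<gamma> > 0" "\<And>x i. \<rho> x i \<ge> \<gamma> * (norm (x - xs i))\<^sup>2"
    and N: "N \<ge> 1"
    and kappa: "\<And>x \<theta>. (x, \<theta>) \<in> empc_domain p f Y xs bet N \<Longrightarrow>
                  \<exists>\<pi>. empc_optimal p f l Y xs bet N x \<theta> \<pi> \<and> \<pi> [\<theta>] = \<kappa> x \<theta>"
    and init: "(x0, \<theta>0) \<in> empc_domain p f Y xs bet N"
  shows "cl_mean_square p f \<kappa> x0 \<theta>0 \<longlonglongrightarrow> 0"
proof -
  note sm = chain(1)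
  obtain M where N: "N = Suc M" using \<open>N \<ge> 1\<close> by (cases N) auto
  have f0: "\<And>\<theta>. f 0 0 \<theta> = 0" and Y0: "\<And>\<theta>. (0, 0) \<in> Y \<theta>"
    using oss common by (auto simp: opt_steady_state_def)
  have "summable (\<lambda>k. cl_expect p f \<kappa> k \<rho> x0 \<theta>0)"
    by (rule empc_summable_cl_expect_dissipation[OF sm N common(1) Y0 f0 l_s l_nonneg Y_compact
          lam_lsc diss rho_nonneg kappa init])
  then have "summable (\<lambda>k. cl_expect p f \<kappa> k (\<lambda>x \<theta>. (norm x)\<^sup>2) x0 \<theta>0)"
    by (rule summable_cl_expect_dominated[OF sm _ gamma(1)]) (use gamma(2) common(1) in auto)
  moreover have "cl_mean_square p f \<kappa> x0 \<theta>0 = (\<lambda>k. cl_expect p f \<kappa> k (\<lambda>x \<theta>. (norm x)\<^sup>2) x0 \<theta>0)"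
    unfolding cl_mean_square_def by (intro ext sum_histories_cl_traj[where g = "\<lambda>x \<theta>. (norm x)\<^sup>2"])
  ultimately show ?thesis
    by (simp add: summable_LIMSEQ_zero)
qed

end
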